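(* Let $A$ be a real $m\times n$ matrix of rank $\rho\ge1$ with columns $A_1,\ldots,A_n$, let $\mu>0$, and let $\pi:[n]\to[n]$ be a permutation such that $A_{\pi(1)},\ldots,A_{\pi(\rho)}$ are linearly independent. For $k\in\{0,\ldots,\rho\}$ let $W_k$ be the orthogonal projection onto $\mathrm{span}\{A_{\pi(1)},\ldots,A_{\pi(k)}\}$ ($W_0=0$), $W_k^\perp=I-W_k$, and define the orthonormal vectors $Q_k=W_{k-1}^\perp(A_{\pi(k)})/\|W_{k-1}^\perp(A_{\pi(k)})\|$, $k\in[\rho]$. Suppose $s\in[\rho]$ satisfies $\|W_s^\perp(A_i)\|<\mu$ for all $i\in[n]$. Let $Q_{[s]}$ be the $m\times s$ matrix with columns $Q_1,\ldots,Q_s$ and define $F_s:\mathbb R^m\to\mathbb R^s$ by $F_s(v)=(Q_{[s]})^*v$. Then $F_s$ is an $s$-dimensional $2\mu$-distortion of the set of columns of $A$, i.e. $$\sup_{i,j\in[n]}\Big|\,\|A_i-A_j\|-\|F_s(A_i)-F_s(A_j)\|\,\Big|\le 2\mu.$$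
   Context: Norms are Euclidean; $[k]=\{1,\ldots,k\}$; $^*$ denotes transpose. *)

theory Defs
  imports "HOL-Analysis.Analysis"
begin

definition orth_proj :: "'a::euclidean_space set \<Rightarrow> 'a \<Rightarrow> 'a" where
  "orth_proj S v = (THE w. w \<in> span S \<and> (\<forall>u\<in>S. orthogonal (v - w) u))"

definition W :: "(nat \<Rightarrow> 'a::euclidean_space) \<Rightarrow> (nat \<Rightarrow> nat) \<Rightarrow> nat \<Rightarrow> 'a \<Rightarrow> 'a" where
  "W A \<pi> k v = orth_proj ((\<lambda>j. A (\<pi> j)) ` {1..k}) v"

definition W_perp :: "(nat \<Rightarrow> 'a::euclidean_space) \<Rightarrow> (nat \<Rightarrow> nat) \<Rightarrow> nat \<Rightarrow> 'a \<Rightarrow> 'a" where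
  "W_perp A \<pi> k v = v - W A \<pi> k v"

definition Q :: "(nat \<Rightarrow> 'a::euclidean_space) \<Rightarrow> (nat \<Rightarrow> nat) \<Rightarrow> nat \<Rightarrow> 'a" where
  "Q A \<pi> k = W_perp A \<pi> (k - 1) (A (\<pi> k)) /\<^sub>R norm (W_perp A \<pi> (k - 1) (A (\<pi> k)))"

text \<open>F_s(v) = (Q_[s])^* v, as a vector in R^s indexed by {1..s}.\<close>
definition F :: "(nat \<Rightarrow> 'a::euclidean_space) \<Rightarrow> (nat \<Rightarrow> nat) \<Rightarrow> nat \<Rightarrow> 'a \<Rightarrow> nat \<Rightarrow> real" where
  "F A \<pi> s v = (\<lambda>k. Q A \<pi> k \<bullet> v)"

definition normR :: "nat \<Rightarrow> (nat \<Rightarrow> real) \<Rightarrow> real" where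
  "normR s x = L2_set x {1..s}"

end

theory Submission
  imports Defs
begin

text \<open>The vectors \<open>Q\<^sub>1, \<dots>, Q\<^sub>s\<close> are the Gram--Schmidt orthonormalisation of
  \<open>A\<^bsub>\<pi>(1)\<^esub>, \<dots>, A\<^bsub>\<pi>(s)\<^esub>\<close>, so they form an orthonormal basis of the range of \<open>W\<^sub>s\<close>.
  Since every \<open>Q\<^sub>k\<close> is orthogonal to the range of \<open>W\<^sub>s\<^sup>\<perp>\<close>, we get
  \<open>F\<^sub>s(v) = F\<^sub>s(W\<^sub>s v)\<close> and \<open>\<parallel>F\<^sub>s(v)\<parallel> = \<parallel>W\<^sub>s v\<parallel>\<close>. Hence
  \<open>\<parallel>A\<^sub>i - A\<^sub>j\<parallel>\<close> and \<open>\<parallel>F\<^sub>s(A\<^sub>i) - F\<^sub>s(A\<^sub>j)\<parallel> = \<parallel>W\<^sub>s A\<^sub>i - W\<^sub>s A\<^sub>j\<parallel>\<close> differ by at most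
  \<open>\<parallel>W\<^sub>s\<^sup>\<perp> A\<^sub>i\<parallel> + \<parallel>W\<^sub>s\<^sup>\<perp> A\<^sub>j\<parallel> < 2\<mu>\<close>.\<close>

lemma orth_proj_characterization:
  fixes S :: "'a::euclidean_space set"
  shows "orth_proj S v \<in> span S \<and> (\<forall>u\<in>span S. orthogonal (v - orth_proj S v) u)"
proof -
  obtain y z where y: "y \<in> span S" and z: "\<And>w. w \<in> span S \<Longrightarrow> orthogonal z w"
    and v: "v = y + z"
    using orthogonal_subspace_decomp_exists[of S v] by metis
  have "\<exists>!w. w \<in> span S \<and> (\<forall>u\<in>S. orthogonal (v - w) u)"
  proof (rule ex1I[of _ y])
    show "y \<in> span S \<and> (\<forall>u\<in>S. orthogonal (v - y) u)"
      using y z v by (simp add: span_base)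
  next
    fix w assume w: "w \<in> span S \<and> (\<forall>u\<in>S. orthogonal (v - w) u)"
    have "orthogonal (w - y) u" if "u \<in> S" for u
    proof -
      have "orthogonal (v - y) u" "orthogonal (v - w) u"
        using z[of u] v w that by (simp_all add: span_base)
      then show ?thesis unfolding orthogonal_def by (simp add: inner_diff_left)
    qed
    moreover have "w - y \<in> span S" using w y by (simp add: span_diff)
    ultimately have "orthogonal (w - y) (w - y)" using orthogonal_to_span by blast
    then show "w = y" by (simp add: orthogonal_def)
  qed
  then have "orth_proj S v \<in> span S \<and> (\<forall>u\<in>S. orthogonal (v - orth_proj S v) u)"
    unfolding orth_proj_def by (rule theI')
  then show ?thesis using orthogonal_to_span by blast
qed

lemma norm_squared_eq_sum_inner_orthonormal:
  fixes q :: "nat \<Rightarrow> 'a::euclidean_space"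
  assumes "finite I" and unit: "\<And>i. i \<in> I \<Longrightarrow> norm (q i) = 1"
    and orth: "\<And>i j. i \<in> I \<Longrightarrow> j \<in> I \<Longrightarrow> i \<noteq> j \<Longrightarrow> q i \<bullet> q j = 0"
    and x: "x \<in> span (q ` I)"
  shows "(norm x)\<^sup>2 = (\<Sum>i\<in>I. (q i \<bullet> x)\<^sup>2)"
proof -
  define y where "y = x - (\<Sum>i\<in>I. (q i \<bullet> x) *\<^sub>R q i)"
  have "orthogonal y (q j)" if j: "j \<in> I" for j
  proof -
    have "q j \<bullet> (\<Sum>i\<in>I. (q i \<bullet> x) *\<^sub>R q i) = (\<Sum>i\<in>I. if i = j then q i \<bullet> x else 0)"
      unfolding inner_sum_right
      by (rule sum.cong) (use unit orth j in \<open>auto simp: norm_eq_1 inner_commute\<close>)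
    also have "\<dots> = q j \<bullet> x" using \<open>finite I\<close> j by simp
    finally have "q j \<bullet> y = 0" unfolding y_def by (simp add: inner_diff_right)
    then show ?thesis by (metis orthogonal_def inner_commute)
  qed
  moreover have "y \<in> span (q ` I)" unfolding y_def
    by (intro span_diff x span_sum span_scale span_base) auto
  ultimately have "orthogonal y y" using orthogonal_to_span by blast
  then have "y = 0" by (simp add: orthogonal_def)
  then have "x = (\<Sum>i\<in>I. (q i \<bullet> x) *\<^sub>R q i)" unfolding y_def by simp
  then have "x \<bullet> x = (\<Sum>i\<in>I. (q i \<bullet> x)\<^sup>2)"
    by (metis (no_types, lifting) inner_sum_right inner_scaleR_right inner_commute
        power2_eq_square sum.cong)
  then show ?thesis by (simp add: power2_norm_eq_inner)
qed

abbreviation prefix_span :: "(nat \<Rightarrow> 'a::euclidean_space) \<Rightarrow> (nat \<Rightarrow> nat) \<Rightarrow> nat \<Rightarrow> 'a set" where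
  "prefix_span A \<pi> k \<equiv> span ((\<lambda>j. A (\<pi> j)) ` {1..k})"

lemma prefix_span_mono: "j \<le> k \<Longrightarrow> prefix_span A \<pi> j \<subseteq> prefix_span A \<pi> k"
  by (rule span_mono) auto

lemma W_in_prefix_span: "W A \<pi> k v \<in> prefix_span A \<pi> k"
  unfolding W_def using orth_proj_characterization by blast

lemma W_perp_orthogonal: "u \<in> prefix_span A \<pi> k \<Longrightarrow> W_perp A \<pi> k v \<bullet> u = 0"
  unfolding W_perp_def W_def using orth_proj_characterization orthogonal_def by blast

lemma Q_in_prefix_span:
  assumes "1 \<le> k" shows "Q A \<pi> k \<in> prefix_span A \<pi> k"
proof -
  have "A (\<pi> k) \<in> prefix_span A \<pi> k" using assms by (auto intro: span_base)
  moreover have "W A \<pi> (k - 1) (A (\<pi> k)) \<in> prefix_span A \<pi> k"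
    using W_in_prefix_span[of A \<pi> "k - 1"] prefix_span_mono[of "k - 1" k A \<pi>] by auto
  ultimately show ?thesis
    unfolding Q_def W_perp_def by (intro span_scale span_diff)
qed

lemma Q_orthogonal:
  assumes "1 \<le> i" "i < j" shows "Q A \<pi> i \<bullet> Q A \<pi> j = 0"
proof -
  have "i \<le> j - 1" using assms by simp
  then have "Q A \<pi> i \<in> prefix_span A \<pi> (j - 1)"
    using Q_in_prefix_span[OF assms(1), of A \<pi>] prefix_span_mono[of i "j - 1" A \<pi>] by blast
  then have "W_perp A \<pi> (j - 1) (A (\<pi> j)) \<bullet> Q A \<pi> i = 0" by (rule W_perp_orthogonal)
  then show ?thesis unfolding Q_def[of A \<pi> j] by (simp add: inner_commute)
qed

lemma Q_inner_W_perp: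
  assumes "1 \<le> k" "k \<le> s" shows "Q A \<pi> k \<bullet> W_perp A \<pi> s v = 0"
  using W_perp_orthogonal Q_in_prefix_span[OF assms(1)] prefix_span_mono[OF assms(2)]
  by (metis inner_commute subsetD)

locale gram_schmidt =
  fixes A :: "nat \<Rightarrow> 'a::euclidean_space" and \<pi> :: "nat \<Rightarrow> nat" and r :: nat
  assumes independent_prefix: "independent ((\<lambda>k. A (\<pi> k)) ` {1..r})"
    and inj_prefix: "inj_on (\<lambda>k. A (\<pi> k)) {1..r}"
begin

lemma W_perp_step_nonzero:
  assumes k: "k \<in> {1..r}" shows "W_perp A \<pi> (k - 1) (A (\<pi> k)) \<noteq> 0"
proof
  assume "W_perp A \<pi> (k - 1) (A (\<pi> k)) = 0"
  then have "A (\<pi> k) \<in> prefix_span A \<pi> (k - 1)"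
    using W_in_prefix_span unfolding W_perp_def by (metis eq_iff_diff_eq_0)
  moreover have "(\<lambda>j. A (\<pi> j)) ` {1..k - 1} \<subseteq> (\<lambda>j. A (\<pi> j)) ` {1..r} - {A (\<pi> k)}"
    using k inj_onD[OF inj_prefix] by fastforce
  ultimately have "A (\<pi> k) \<in> span ((\<lambda>j. A (\<pi> j)) ` {1..r} - {A (\<pi> k)})"
    using span_mono by blast
  then show False
    using independent_prefix k unfolding dependent_def by auto
qed

lemma norm_Q: "k \<in> {1..r} \<Longrightarrow> norm (Q A \<pi> k) = 1"
  unfolding Q_def using W_perp_step_nonzero by simp

lemma prefix_span_subset_span_Q:
  "k \<le> r \<Longrightarrow> prefix_span A \<pi> k \<subseteq> span (Q A \<pi> ` {1..k})"
proof (induction k)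
  case 0
  then show ?case by simp
next
  case (Suc k)
  have span_Q_mono: "span (Q A \<pi> ` {1..k}) \<subseteq> span (Q A \<pi> ` {1..Suc k})"
    by (rule span_mono) auto
  have "A (\<pi> (Suc k)) \<in> span (Q A \<pi> ` {1..Suc k})"
  proof -
    let ?u = "W_perp A \<pi> k (A (\<pi> (Suc k)))"
    have "A (\<pi> (Suc k)) = norm ?u *\<^sub>R Q A \<pi> (Suc k) + W A \<pi> k (A (\<pi> (Suc k)))"
      using W_perp_step_nonzero[of "Suc k"] Suc.prems
      unfolding Q_def by (simp add: W_perp_def)
    moreover have "W A \<pi> k (A (\<pi> (Suc k))) \<in> span (Q A \<pi> ` {1..Suc k})"
      using W_in_prefix_span Suc span_Q_mono by fastforce
    ultimately show ?thesis
      by (metis span_add span_scale span_base atLeastAtMost_iff image_eqI le_add1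
          le_refl plus_1_eq_Suc)
  qed
  moreover have "A (\<pi> j) \<in> span (Q A \<pi> ` {1..Suc k})" if "j \<in> {1..k}" for j
  proof -
    have "A (\<pi> j) \<in> prefix_span A \<pi> k" using that by (auto intro: span_base)
    then show ?thesis using Suc span_Q_mono by auto
  qed
  ultimately show ?case
    by (intro span_minimal subspace_span) (auto simp: le_Suc_eq)
qed

lemma normR_Q_inner:
  assumes "s \<le> r" and "x \<in> prefix_span A \<pi> s"
  shows "normR s (\<lambda>k. Q A \<pi> k \<bullet> x) = norm x"
proof -
  have "Q A \<pi> i \<bullet> Q A \<pi> j = 0" if "1 \<le> i" "1 \<le> j" "i \<noteq> j" for i j
    using that Q_orthogonal[of i j] Q_orthogonal[of j i] inner_commute nat_neq_iff by metis
  then have "(norm x)\<^sup>2 = (\<Sum>k\<in>{1..s}. (Q A \<pi> k \<bullet> x)\<^sup>2)"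
    using assms prefix_span_subset_span_Q[of s]
    by (intro norm_squared_eq_sum_inner_orthonormal norm_Q) auto
  then show ?thesis
    unfolding normR_def L2_set_def by (metis norm_ge_zero real_sqrt_abs real_sqrt_unique)
qed

lemma distortion_bound:
  assumes "s \<le> r"
  shows "\<bar>norm (v - w) - normR s (\<lambda>k. F A \<pi> s v k - F A \<pi> s w k)\<bar>
    \<le> norm (W_perp A \<pi> s v) + norm (W_perp A \<pi> s w)"
proof -
  define x where "x = W A \<pi> s v - W A \<pi> s w"
  have perp: "v - w - x = W_perp A \<pi> s v - W_perp A \<pi> s w"
    unfolding x_def W_perp_def by simp
  have "F A \<pi> s v k - F A \<pi> s w k = Q A \<pi> k \<bullet> x" if "k \<in> {1..s}" for k
  proof -
    have "Q A \<pi> k \<bullet> (v - w - x) = 0"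
      using that unfolding perp by (simp add: inner_diff_right Q_inner_W_perp)
    then show ?thesis unfolding F_def by (simp add: inner_diff_right)
  qed
  then have "normR s (\<lambda>k. F A \<pi> s v k - F A \<pi> s w k) = normR s (\<lambda>k. Q A \<pi> k \<bullet> x)"
    unfolding normR_def by (rule L2_set_cong[OF refl])
  also have "\<dots> = norm x"
    using assms unfolding x_def by (intro normR_Q_inner span_diff W_in_prefix_span)
  finally have "\<bar>norm (v - w) - normR s (\<lambda>k. F A \<pi> s v k - F A \<pi> s w k)\<bar> \<le> norm (v - w - x)"
    by (simp add: norm_triangle_ineq3)
  also have "\<dots> \<le> norm (W_perp A \<pi> s v) + norm (W_perp A \<pi> s w)"
    unfolding perp by (rule norm_triangle_ineq4)
  finally show ?thesis .
qed

end

theorem proposition1: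
  fixes A :: "nat \<Rightarrow> real ^ 'm" and n \<rho> s :: nat and \<mu> :: real and \<pi> :: "nat \<Rightarrow> nat"
  assumes rank: "dim (A ` {1..n}) = \<rho>" and rho_pos: "\<rho> \<ge> 1"
    and mu_pos: "\<mu> > 0"
    and perm: "\<pi> permutes {1..n}"
    and indep: "independent ((\<lambda>k. A (\<pi> k)) ` {1..\<rho>})"
    and inj: "inj_on (\<lambda>k. A (\<pi> k)) {1..\<rho>}"
    and s: "s \<in> {1..\<rho>}"
    and small: "\<forall>i\<in>{1..n}. norm (W_perp A \<pi> s (A i)) < \<mu>"
  shows "(SUP ij\<in>{1..n} \<times> {1..n}.
           \<bar>norm (A (fst ij) - A (snd ij))
            - normR s (\<lambda>k. F A \<pi> s (A (fst ij)) k - F A \<pi> s (A (snd ij)) k)\<bar>) \<le> 2 * \<mu>"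
proof (rule cSUP_least)
  interpret gram_schmidt A \<pi> \<rho> using indep inj by unfold_locales
  show "{1..n} \<times> {1..n} \<noteq> {}"
  proof
    assume "{1..n} \<times> {1..n} = {}"
    then have "{1..n} = ({} :: nat set)" by blast
    then have "dim (A ` {1..n}) = 0" by (simp only: image_empty dim_empty)
    then show False using rank rho_pos by linarith
  qed
  fix ij assume "ij \<in> {1..n} \<times> {1..n}"
  then have "fst ij \<in> {1..n}" "snd ij \<in> {1..n}" by (auto simp: mem_Times_iff)
  then have "norm (W_perp A \<pi> s (A (fst ij))) + norm (W_perp A \<pi> s (A (snd ij))) \<le> 2 * \<mu>"
    using small by (metis add_mono_thms_linordered_field(5) less_imp_le mult_2)
  then show "\<bar>norm (A (fst ij) - A (snd ij))
      - normR s (\<lambda>k. F A \<pi> s (A (fst ij)) k - F A \<pi> s (A (snd ij)) k)\<bar> \<le> 2 * \<mu>"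
    using distortion_bound[of s "A (fst ij)" "A (snd ij)"] s by simp
qed

end
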